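(* Let $n,m\geq 1$. Define a map $\Phi$ from $\mathscr H_m(n)$ to the set of $(2m+1)$-historic trees on $n$ vertices recursively: $\Phi(T_1)$ is the one-vertex historic tree (vertex labelled $1$); if $\Phi(T_1,\dots,T_k)=H_k$ has been constructed and $T_{k+1}$ arises from $T_k$ by inserting a key into the $i$-th leaf of $T_k$ (counted from left to right, before any splits are performed), then $\Phi(T_1,\dots,T_{k+1})=H_{k+1}$ is obtained from $H_k$ by placing a new vertex labelled $k+1$ at the $i$-th external vertex of $H_k$ (counted from left to right). Then $\Phi$ is well defined (in particular, for every $k$ the number of external vertices of $H_k$ equals the number of leaves of $T_k$), and $\Phi$ is a bijection between $\mathscr H_m(n)$ and the set of all $(2m+1)$-historic trees on $n$ vertices.
   Context: Fix an integer $m\geq 1$. A $B$-tree of order $2m+1$ is a rooted plane tree whose nodes contain pairwise distinct real keys such that: keys are stored in increasing order from left to right; a non-leaf node with $k$ keys has exactly $k+1$ children, the $i$-th child being attached between the $(i-1)$-th and $i$-th key of the node (the first child to the left of the first key, the last to the right of the last key), with all keys in the subtree of that child lying between those two keys; every node contains between $m$ and $2m$ keys, except the root, which contains between $1$ and $2m$ keys; and all leaves have the same distance to the root. Insertion algorithm: a new key is placed in the appropriate leaf at the appropriate position; if that leaf now has $2m+1$ keys, it is split: its median key moves up into the parent node (at the appropriate position), and the $m$ smallest and the $m$ largest keys form two new nodes, which become the children of the parent on either side of the moved key; this is repeated at the parent if it now contains $2m+1$ keys; if the root gets $2m+1$ keys, a new root containing only its median key is created above it, with the two halves as its children. $B$-trees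 are considered up to isomorphism of rooted plane trees (only the shape and the number of keys in each node matter); leaves are numbered from left to right. A history of a $B$-tree $T_n$ with $n$ keys is a sequence $(T_1,\dots,T_n)$ of $B$-trees of order $2m+1$ such that $T_1$ is the single node containing one key and $T_i$ is obtained from $T_{i-1}$ by inserting one key with the insertion algorithm ($i=2,\dots,n$). $\mathscr H_m(n)$ denotes the set of all histories of all $B$-trees of order $2m+1$ with $n$ keys. A $(2m+1)$-historic tree on $n$ vertices is a rooted plane tree whose $n$ vertices are labelled bijectively by $\{1,\dots,n\}$ so that labels increase along every path from the root to a leaf, and such that (with the root at height $0$) the vertices at heights $2m,3m+1,4m+2,\dots$ (i.e. heights $2m+j(m+1)$, $j\geq 0$), called branchings, have two ordered child slots (left and right), each of which may or may not be occupied by a child, while every other vertex has a single child slot (so at most one child). The vertices of the tree are called internal; the unoccupied child slots are called external vertices, ordered from left to right by the planar structure. *)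

theory Defs
  imports Main
begin

text \<open>A B-tree shape: a node stores only its number of keys and its (ordered)
list of children; a leaf has no children.\<close>

datatype btree = BNode nat "btree list"

fun nleaves :: "btree \<Rightarrow> nat" where
  "nleaves (BNode k ts) = (if ts = [] then 1 else sum_list (map nleaves ts))"

fun leaf_depths :: "btree \<Rightarrow> nat set" where
  "leaf_depths (BNode k ts) = (if ts = [] then {0} else (\<Union>t\<in>set ts. Suc ` leaf_depths t))"

text \<open>Node-size and child-count conditions; \<open>lo\<close> is the lower bound on the number of
keys of the current node (1 for the root, m for all other nodes).\<close>
fun wf_btree :: "nat \<Rightarrow> nat \<Rightarrow> btree \<Rightarrow> bool" where
  "wf_btree m lo (BNode k ts) =
     (lo \<le> k \<and> k \<le> 2*m \<and> (ts = [] \<or> length ts = k + 1) \<and> (\<forall>t\<in>set ts. wf_btree m m t))"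

definition is_btree :: "nat \<Rightarrow> btree \<Rightarrow> bool" where
  "is_btree m t \<longleftrightarrow> wf_btree m 1 t \<and> (\<exists>d. leaf_depths t = {d})"

text \<open>Result of inserting into a subtree: either the subtree (no overflow at its root),
or the two halves of its split root (the median key moves up to the parent).\<close>
datatype ires = Ok btree | Spl btree btree

text \<open>\<open>ins m t i\<close>: insert a key into the i-th leaf (0-based, left to right) of \<open>t\<close>;
\<open>ins_f m ts i\<close>: the same for the i-th leaf of the forest \<open>ts\<close>, returning the new
forest and whether a child was split (so that the parent received one more key).
Since only shapes matter, the position of the new key inside the leaf is irrelevant.\<close>
fun ins :: "nat \<Rightarrow> btree \<Rightarrow> nat \<Rightarrow> ires"
and ins_f :: "nat \<Rightarrow> btree list \<Rightarrow> nat \<Rightarrow> btree list \<times> bool" where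
  "ins m (BNode k ts) i =
     (if ts = [] then
        (if Suc k = 2*m+1 then Spl (BNode m []) (BNode m []) else Ok (BNode (Suc k) []))
      else (case ins_f m ts i of
              (ts', False) \<Rightarrow> Ok (BNode k ts')
            | (ts', True) \<Rightarrow>
                (if Suc k = 2*m+1 then Spl (BNode m (take (m+1) ts')) (BNode m (drop (m+1) ts'))
                 else Ok (BNode (Suc k) ts'))))"
| "ins_f m [] i = ([], False)"
| "ins_f m (t # ts) i =
     (if i < nleaves t then
        (case ins m t i of Ok t' \<Rightarrow> (t' # ts, False) | Spl l r \<Rightarrow> (l # r # ts, True))
      else (case ins_f m ts (i - nleaves t) of (ts', b) \<Rightarrow> (t # ts', b)))"

definition btree_insert :: "nat \<Rightarrow> btree \<Rightarrow> nat \<Rightarrow> btree" where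
  "btree_insert m t i = (case ins m t i of Ok t' \<Rightarrow> t' | Spl l r \<Rightarrow> BNode 1 [l, r])"

text \<open>Histories \<open>(T_1,\<dots>,T_n)\<close>, as lists indexed from 0.\<close>
definition histories :: "nat \<Rightarrow> nat \<Rightarrow> btree list set" where
  "histories m n = {Ts. length Ts = n \<and> Ts ! 0 = BNode 1 [] \<and>
      (\<forall>i<n. is_btree m (Ts ! i)) \<and>
      (\<forall>i. 0 < i \<and> i < n \<longrightarrow>
         (\<exists>l < nleaves (Ts ! (i-1)). Ts ! i = btree_insert m (Ts ! (i-1)) l))}"

definition branching :: "nat \<Rightarrow> nat \<Rightarrow> bool" where
  "branching m d \<longleftrightarrow> 2*m \<le> d \<and> (d - 2*m) mod (m+1) = 0"

text \<open>A vertex with one child slot (\<open>V1\<close>) or two ordered child slots (\<open>V2\<close>);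
a slot is either external (\<open>Ext\<close>) or occupied by a subtree.\<close>
datatype htree = V1 nat hslot | V2 nat hslot hslot
     and hslot = Ext | Sub htree

primrec label :: "htree \<Rightarrow> nat" where
  "label (V1 l s) = l"
| "label (V2 l s1 s2) = l"

primrec labels_h :: "htree \<Rightarrow> nat list" and labels_s :: "hslot \<Rightarrow> nat list" where
  "labels_h (V1 l s) = l # labels_s s"
| "labels_h (V2 l s1 s2) = l # labels_s s1 @ labels_s s2"
| "labels_s Ext = []"
| "labels_s (Sub h) = labels_h h"

text \<open>\<open>hwf m d h\<close>: h sits at height d; branchings (and only they) have two slots;
labels increase from parent to child.\<close>
primrec hwf :: "nat \<Rightarrow> nat \<Rightarrow> htree \<Rightarrow> bool"
and swf :: "nat \<Rightarrow> nat \<Rightarrow> nat \<Rightarrow> hslot \<Rightarrow> bool" where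
  "hwf m d (V1 l s) = (\<not> branching m d \<and> swf m (Suc d) l s)"
| "hwf m d (V2 l s1 s2) = (branching m d \<and> swf m (Suc d) l s1 \<and> swf m (Suc d) l s2)"
| "swf m d p Ext = True"
| "swf m d p (Sub h) = (p < label h \<and> hwf m d h)"

definition historic :: "nat \<Rightarrow> nat \<Rightarrow> htree \<Rightarrow> bool" where
  "historic m n h \<longleftrightarrow> hwf m 0 h \<and> distinct (labels_h h) \<and> set (labels_h h) = {1..n}"

primrec ext_h :: "htree \<Rightarrow> nat" and ext_s :: "hslot \<Rightarrow> nat" where
  "ext_h (V1 l s) = ext_s s"
| "ext_h (V2 l s1 s2) = ext_s s1 + ext_s s2"
| "ext_s Ext = 1"
| "ext_s (Sub h) = ext_h h"

definition new_vertex :: "nat \<Rightarrow> nat \<Rightarrow> nat \<Rightarrow> htree" where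
  "new_vertex m d lab = (if branching m d then V2 lab Ext Ext else V1 lab Ext)"

text \<open>Place a new vertex labelled \<open>lab\<close> at the i-th external vertex (0-based, left to right);
\<open>d\<close> is the height of the vertex (resp. of the vertex that would occupy the slot).\<close>
primrec add_h :: "nat \<Rightarrow> nat \<Rightarrow> nat \<Rightarrow> htree \<Rightarrow> nat \<Rightarrow> htree"
and add_s :: "nat \<Rightarrow> nat \<Rightarrow> nat \<Rightarrow> hslot \<Rightarrow> nat \<Rightarrow> hslot" where
  "add_h m d lab (V1 l s) i = V1 l (add_s m (Suc d) lab s i)"
| "add_h m d lab (V2 l s1 s2) i =
     (if i < ext_s s1 then V2 l (add_s m (Suc d) lab s1 i) s2
      else V2 l s1 (add_s m (Suc d) lab s2 (i - ext_s s1)))"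
| "add_s m d lab Ext i = Sub (new_vertex m d lab)"
| "add_s m d lab (Sub h) i = Sub (add_h m d lab h i)"

definition leaf_of :: "nat \<Rightarrow> btree \<Rightarrow> btree \<Rightarrow> nat" where
  "leaf_of m T T' = (THE l. l < nleaves T \<and> T' = btree_insert m T l)"

text \<open>\<open>phi_pref m Ts k\<close> = \<open>H_{k+1} = \<Phi>(T_1,\<dots>,T_{k+1})\<close>.\<close>
primrec phi_pref :: "nat \<Rightarrow> btree list \<Rightarrow> nat \<Rightarrow> htree" where
  "phi_pref m Ts 0 = new_vertex m 0 1"
| "phi_pref m Ts (Suc k) =
     add_h m 0 (k + 2) (phi_pref m Ts k) (leaf_of m (Ts ! k) (Ts ! Suc k))"

definition Phi :: "nat \<Rightarrow> btree list \<Rightarrow> htree" where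
  "Phi m Ts = phi_pref m Ts (length Ts - 1)"

end

theory Submission
  imports Defs
begin

text \<open>A B-tree is seen through its leaf profile, the list of the key counts of its leaves:
inserting into leaf \<open>i\<close> replaces the \<open>i\<close>-th count \<open>c\<close> by \<open>c + 1\<close>, or by \<open>m, m\<close> when
\<open>c = 2m\<close>, since splits further up do not change the leaves.  Placing a vertex at the \<open>i\<close>-th
external vertex of a historic tree likewise replaces the height \<open>x\<close> of that external vertex by
\<open>x + 1\<close>, or by \<open>x + 1, x + 1\<close> when the new vertex is a branching.  The map sending a height
\<open>x \<le> 2m\<close> to \<open>x\<close> and larger heights to \<open>m + (x - 2m - 1) mod (m + 1)\<close> intertwines the two
operations, so by induction the leaf profile of \<open>T\<^sub>k\<close> is the image of the list of external
heights of \<open>H\<^sub>k\<close>.  In particular leaves and external vertices correspond, and the leaf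
receiving a key is determined by the resulting tree, because the profile first changes at that
leaf.  \<open>\<Phi>\<close> is injective because a vertex carrying a fresh label determines the slot it was
placed in, and surjective because deleting the vertex with the largest label from a historic tree
leaves a historic tree.\<close>

definition expand_at :: "('a \<Rightarrow> 'a list) \<Rightarrow> nat \<Rightarrow> 'a list \<Rightarrow> 'a list" where
  "expand_at g i xs = take i xs @ g (xs ! i) @ drop (Suc i) xs"

lemma expand_at_append_left:
  "i < length xs \<Longrightarrow> expand_at g i (xs @ ys) = expand_at g i xs @ ys"
  by (simp add: expand_at_def nth_append)

lemma expand_at_append_right:
  "length xs \<le> i \<Longrightarrow> expand_at g i (xs @ ys) = xs @ expand_at g (i - length xs) ys"
  by (simp add: expand_at_def nth_append Suc_diff_le)

lemma map_expand_at:
  assumes "\<And>x. map f (g x) = g' (f x)" "i < length xs"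
  shows "map f (expand_at g i xs) = expand_at g' i (map f xs)"
  using assms by (simp add: expand_at_def take_map drop_map)

lemma expand_at_index_inj:
  assumes "\<And>x. g x \<noteq> [] \<and> hd (g x) \<noteq> x"
    and "i < length xs" "j < length xs" "expand_at g i xs = expand_at g j xs"
  shows "i = j"
proof -
  have neq: "expand_at g i xs \<noteq> expand_at g j xs" if "i < j" "j < length xs" for i j
  proof -
    have "expand_at g i xs ! i = hd (g (xs ! i))"
      using that assms(1) by (simp add: expand_at_def nth_append hd_conv_nth)
    moreover have "expand_at g j xs ! i = xs ! i"
      using that by (simp add: expand_at_def nth_append)
    ultimately show ?thesis using assms(1) by metis
  qed
  show ?thesis
    using neq[of i j] neq[of j i] assms(2-4) by (metis linorder_neqE_nat)
qed

section \<open>Leaf profiles of B-trees\<close>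

fun leaf_keys :: "btree \<Rightarrow> nat list" where
  "leaf_keys (BNode k ts) = (if ts = [] then [k] else concat (map leaf_keys ts))"

lemma nleaves_eq_length_leaf_keys: "nleaves t = length (leaf_keys t)"
  by (induction t rule: leaf_keys.induct) (auto simp: length_concat comp_def intro!: arg_cong[where f=sum_list])

lemma leaf_depths_nonempty: "leaf_depths t \<noteq> {}"
  by (induction t rule: leaf_depths.induct) auto

lemma leaf_depths_node_singleton:
  assumes "ts \<noteq> []"
  shows "leaf_depths (BNode k ts) = {Suc d} \<longleftrightarrow> (\<forall>t\<in>set ts. leaf_depths t = {d})"
proof
  assume "leaf_depths (BNode k ts) = {Suc d}"
  then have "Suc ` leaf_depths t \<subseteq> {Suc d}" if "t \<in> set ts" for t
    using assms that by auto
  then have "Suc ` leaf_depths t = {Suc d}" if "t \<in> set ts" for t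
    using that leaf_depths_nonempty[of t] by blast
  then show "\<forall>t\<in>set ts. leaf_depths t = {d}"
    by (metis image_empty image_insert inj_Suc inj_image_eq_iff)
qed (use assms in auto)

lemma leaf_depths_node_singleton_Suc:
  assumes "ts \<noteq> []" "leaf_depths (BNode k ts) = {d}"
  shows "\<exists>d'. d = Suc d'"
  using assms leaf_depths_nonempty by (cases ts) auto

definition balanced_forest :: "nat \<Rightarrow> nat \<Rightarrow> btree list \<Rightarrow> bool" where
  "balanced_forest m d ts \<longleftrightarrow> (\<forall>t\<in>set ts. wf_btree m m t \<and> leaf_depths t = {d})"

lemma balanced_forest_node:
  assumes "balanced_forest m d ts" "length ts = k + 1" "lo \<le> k" "k \<le> 2*m"
  shows "wf_btree m lo (BNode k ts) \<and> leaf_depths (BNode k ts) = {Suc d}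
    \<and> leaf_keys (BNode k ts) = concat (map leaf_keys ts)"
proof -
  have "ts \<noteq> []" using assms(2) by auto
  then show ?thesis
    using assms leaf_depths_node_singleton by (auto simp: balanced_forest_def)
qed

lemma balanced_forest_split:
  assumes "balanced_forest m d ts" "length ts = 2*m + 2"
  defines "l \<equiv> BNode m (take (m+1) ts)" and "r \<equiv> BNode m (drop (m+1) ts)"
  shows "wf_btree m m l \<and> leaf_depths l = {Suc d}" "wf_btree m m r \<and> leaf_depths r = {Suc d}"
    and "leaf_keys l @ leaf_keys r = concat (map leaf_keys ts)"
proof -
  have "balanced_forest m d (take (m+1) ts)" "balanced_forest m d (drop (m+1) ts)"
    using assms(1) by (auto simp: balanced_forest_def dest: in_set_takeD in_set_dropD)
  have L: "wf_btree m m l \<and> leaf_depths l = {Suc d} \<and> leaf_keys l = concat (map leaf_keys (take (m+1) ts))"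
    unfolding l_def using \<open>balanced_forest m d (take (m+1) ts)\<close>
    by (rule balanced_forest_node) (use assms(2) in auto)
  have R: "wf_btree m m r \<and> leaf_depths r = {Suc d} \<and> leaf_keys r = concat (map leaf_keys (drop (m+1) ts))"
    unfolding r_def using \<open>balanced_forest m d (drop (m+1) ts)\<close>
    by (rule balanced_forest_node) (use assms(2) in auto)
  show "wf_btree m m l \<and> leaf_depths l = {Suc d}" "wf_btree m m r \<and> leaf_depths r = {Suc d}"
    using L R by simp_all
  show "leaf_keys l @ leaf_keys r = concat (map leaf_keys ts)"
    using L R by (simp flip: concat_append map_append)
qed

definition grow_leaf :: "nat \<Rightarrow> nat \<Rightarrow> nat list" where
  "grow_leaf m c = (if Suc c = 2*m+1 then [m, m] else [Suc c])"

definition ins_correct :: "nat \<Rightarrow> nat \<Rightarrow> nat \<Rightarrow> btree \<Rightarrow> nat \<Rightarrow> bool" where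
  "ins_correct m lo d t i \<longleftrightarrow> (case ins m t i of
      Ok t' \<Rightarrow> wf_btree m lo t' \<and> leaf_depths t' = {d}
        \<and> leaf_keys t' = expand_at (grow_leaf m) i (leaf_keys t)
    | Spl l r \<Rightarrow> balanced_forest m d [l, r]
        \<and> leaf_keys l @ leaf_keys r = expand_at (grow_leaf m) i (leaf_keys t))"

definition ins_f_correct :: "nat \<Rightarrow> nat \<Rightarrow> btree list \<Rightarrow> nat \<Rightarrow> bool" where
  "ins_f_correct m d ts i \<longleftrightarrow> (case ins_f m ts i of (ts', b) \<Rightarrow>
      length ts' = length ts + (if b then 1 else 0) \<and> balanced_forest m d ts'
      \<and> concat (map leaf_keys ts') = expand_at (grow_leaf m) i (concat (map leaf_keys ts)))"

lemma ins_node_correct: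
  assumes "wf_btree m lo (BNode k ts)" "ts \<noteq> []" "ins_f_correct m d ts i"
  shows "ins_correct m lo (Suc d) (BNode k ts) i"
proof -
  obtain ts' b where res: "ins_f m ts i = (ts', b)" by fastforce
  have len: "length ts = k + 1" and k: "lo \<le> k" "k \<le> 2*m"
    using assms(1,2) by auto
  have ts': "length ts' = length ts + (if b then 1 else 0)" "balanced_forest m d ts'"
    "concat (map leaf_keys ts') = expand_at (grow_leaf m) i (leaf_keys (BNode k ts))"
    using assms(2,3) res by (auto simp: ins_f_correct_def)
  consider "\<not> b" | "b" "Suc k = 2*m+1" | "b" "Suc k \<noteq> 2*m+1" by blast
  then show ?thesis
  proof cases
    case 1
    then show ?thesis using ts' res assms(2) len balanced_forest_node[OF ts'(2) _ k]
      by (simp add: ins_correct_def)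
  next
    case 2
    then show ?thesis using ts' res assms(2) len balanced_forest_split[OF ts'(2)]
      by (auto simp: ins_correct_def balanced_forest_def)
  next
    case 3
    then have "Suc k \<le> 2*m" using k by simp
    then show ?thesis using 3 ts' res assms(2) len balanced_forest_node[OF ts'(2), of "Suc k" lo] k
      by (simp add: ins_correct_def)
  qed
qed

lemma ins_ins_f_correct:
  "wf_btree m lo t \<Longrightarrow> leaf_depths t = {d} \<Longrightarrow> i < nleaves t \<Longrightarrow> ins_correct m lo d t i"
  "balanced_forest m d ts \<Longrightarrow> i < sum_list (map nleaves ts) \<Longrightarrow> ins_f_correct m d ts i"
proof (induction m t i and m ts i arbitrary: lo d and d rule: ins_ins_f.induct)
  case (1 m k ts i lo d)
  show ?case
  proof (cases "ts = []")
    case True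
    then show ?thesis using 1 by (auto simp: ins_correct_def expand_at_def grow_leaf_def balanced_forest_def)
  next
    case False
    obtain d' where "d = Suc d'"
      using leaf_depths_node_singleton_Suc[OF False "1.prems"(2)] by blast
    then have "balanced_forest m d' ts"
      using "1.prems"(1,2) False leaf_depths_node_singleton by (auto simp: balanced_forest_def)
    then have "ins_f_correct m d' ts i" using "1.IH" "1.prems"(3) False by simp
    then show ?thesis using "1.prems"(1) False \<open>d = Suc d'\<close> by (simp add: ins_node_correct)
  qed
next
  case (2 m i d)
  then show ?case by simp
next
  case (3 m t ts i d)
  have t: "wf_btree m m t" "leaf_depths t = {d}" "balanced_forest m d ts"
    using "3.prems"(1) by (auto simp: balanced_forest_def)
  show ?case
  proof (cases "i < nleaves t")
    case True
    then have "ins_correct m m d t i" using "3.IH"(1) t by simp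
    then show ?thesis using True t
      by (auto simp: ins_correct_def ins_f_correct_def balanced_forest_def expand_at_append_left
          nleaves_eq_length_leaf_keys split: ires.splits)
  next
    case False
    then have "ins_f_correct m d ts (i - nleaves t)" using "3.IH"(2) "3.prems"(2) t by simp
    then show ?thesis using False t
      by (auto simp: ins_f_correct_def balanced_forest_def expand_at_append_right
          nleaves_eq_length_leaf_keys split: prod.splits)
  qed
qed

section \<open>External heights of historic trees\<close>

primrec ext_heights_h :: "nat \<Rightarrow> htree \<Rightarrow> nat list"
  and ext_heights_s :: "nat \<Rightarrow> hslot \<Rightarrow> nat list" where
  "ext_heights_h d (V1 l s) = ext_heights_s (Suc d) s"
| "ext_heights_h d (V2 l s1 s2) = ext_heights_s (Suc d) s1 @ ext_heights_s (Suc d) s2"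
| "ext_heights_s d Ext = [d]"
| "ext_heights_s d (Sub h) = ext_heights_h d h"

lemma length_ext_heights: "length (ext_heights_h d h) = ext_h h" "length (ext_heights_s d s) = ext_s s"
  by (induction h and s arbitrary: d and d) auto

definition grow_ext :: "nat \<Rightarrow> nat \<Rightarrow> nat list" where
  "grow_ext m x = (if branching m x then [Suc x, Suc x] else [Suc x])"

lemma ext_heights_add:
  "i < ext_h h \<Longrightarrow> ext_heights_h d (add_h m d lab h i) = expand_at (grow_ext m) i (ext_heights_h d h)"
  "i < ext_s s \<Longrightarrow> ext_heights_s d (add_s m d lab s i) = expand_at (grow_ext m) i (ext_heights_s d s)"
proof (induction h and s arbitrary: d i and d i)
  case (V2 l s1 s2)
  then show ?case
    by (auto simp: expand_at_append_left expand_at_append_right length_ext_heights)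
next
  case Ext
  then show ?case by (auto simp: expand_at_def grow_ext_def new_vertex_def)
qed auto

lemma label_add_h [simp]: "label (add_h m d lab h i) = label h"
  by (cases h) auto

lemma label_new_vertex [simp]: "label (new_vertex m d lab) = lab"
  by (simp add: new_vertex_def)

lemma label_in_labels: "label h \<in> set (labels_h h)"
  by (cases h) auto

lemma set_labels_add:
  "set (labels_h (add_h m d lab h i)) = insert lab (set (labels_h h))"
  "set (labels_s (add_s m d lab s i)) = insert lab (set (labels_s s))"
  by (induction h and s arbitrary: d i and d i) (auto simp: new_vertex_def)

lemma distinct_labels_add:
  "distinct (labels_h (add_h m d lab h i)) \<longleftrightarrow> lab \<notin> set (labels_h h) \<and> distinct (labels_h h)"
  "distinct (labels_s (add_s m d lab s i)) \<longleftrightarrow> lab \<notin> set (labels_s s) \<and> distinct (labels_s s)"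
  by (induction h and s arbitrary: d i and d i) (auto simp: new_vertex_def set_labels_add)

lemma hwf_add:
  "hwf m d h \<Longrightarrow> \<forall>x\<in>set (labels_h h). x < lab \<Longrightarrow> hwf m d (add_h m d lab h i)"
  "swf m d p s \<Longrightarrow> p < lab \<Longrightarrow> \<forall>x\<in>set (labels_s s). x < lab \<Longrightarrow> swf m d p (add_s m d lab s i)"
  by (induction h and s arbitrary: d i and d p i) (auto simp: new_vertex_def)

lemma add_s_neq:
  "lab \<notin> set (labels_s s') \<Longrightarrow> add_s m d lab s i \<noteq> s'"
  by (metis insertI1 set_labels_add(2))

lemma new_vertex_neq_add_h:
  "lab \<notin> set (labels_h h) \<Longrightarrow> new_vertex m d lab \<noteq> add_h m d' lab h i"
  by (metis label_add_h label_in_labels label_new_vertex)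

lemma add_inj:
  "lab \<notin> set (labels_h h) \<Longrightarrow> lab \<notin> set (labels_h h') \<Longrightarrow> i < ext_h h \<Longrightarrow> i' < ext_h h' \<Longrightarrow>
     add_h m d lab h i = add_h m d lab h' i' \<Longrightarrow> h = h' \<and> i = i'"
  "lab \<notin> set (labels_s s) \<Longrightarrow> lab \<notin> set (labels_s s') \<Longrightarrow> i < ext_s s \<Longrightarrow> i' < ext_s s' \<Longrightarrow>
     add_s m d lab s i = add_s m d lab s' i' \<Longrightarrow> s = s' \<and> i = i'"
proof (induction h and s arbitrary: d h' i i' and d s' i i')
  case (V1 l s)
  then show ?case by (cases h') (auto split: if_splits)
next
  case (V2 l s1 s2)
  show ?case
  proof (cases h')
    case (V1 l' s')
    then show ?thesis using V2.prems(5) by (simp split: if_splits)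
  next
    case (V2 l' s1' s2')
    note eq = V2.prems(5)[unfolded V2]
    consider "i < ext_s s1" "i' < ext_s s1'" | "\<not> i < ext_s s1" "\<not> i' < ext_s s1'"
      | "i < ext_s s1" "\<not> i' < ext_s s1'" | "\<not> i < ext_s s1" "i' < ext_s s1'"
      by blast
    then show ?thesis
    proof cases
      case 1
      then show ?thesis using eq V2 V2.prems(1-4) "V2.IH"(1)[of s1' i i' "Suc d"] by auto
    next
      case 2
      then have "l = l'" "s1 = s1'"
        and eq2: "add_s m (Suc d) lab s2 (i - ext_s s1) = add_s m (Suc d) lab s2' (i' - ext_s s1')"
        using eq by auto
      moreover have "i - ext_s s1 < ext_s s2" "i' - ext_s s1' < ext_s s2'"
        using 2 V2 V2.prems(3,4) by auto
      ultimately show ?thesis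
        using 2 V2 V2.prems(1,2) "V2.IH"(2)[OF _ _ _ _ eq2] by auto
    next
      case 3
      then show ?thesis using eq V2 V2.prems(2) add_s_neq by auto
    next
      case 4
      then show ?thesis using eq V2 V2.prems(1) add_s_neq by fastforce
    qed
  qed
next
  case Ext
  then show ?case by (cases s') (auto dest: new_vertex_neq_add_h[THEN notE, rotated])
next
  case (Sub h)
  then show ?case by (cases s') (auto dest: sym[THEN new_vertex_neq_add_h[THEN notE, rotated]])
qed

lemma labels_above_root:
  "hwf m d h \<Longrightarrow> x \<in> set (labels_h h) \<Longrightarrow> label h \<le> x"
  "swf m d p s \<Longrightarrow> x \<in> set (labels_s s) \<Longrightarrow> p < x"
  by (induction h and s arbitrary: d x and d p x) force+

lemma hwf_root_max_label:
  assumes "hwf m d h" "\<forall>x\<in>set (labels_h h). x \<le> label h"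
  shows "h = new_vertex m d (label h)"
proof -
  have no_child: "s = Ext" if "swf m (Suc d) (label h) s" "set (labels_s s) \<subseteq> set (labels_h h)" for s
  proof (cases s)
    case (Sub h')
    then have "label h' \<in> set (labels_h h)" using that(2) label_in_labels[of h'] by auto
    moreover have "label h < label h'"
      using that(1) Sub label_in_labels[of h'] labels_above_root(2) by auto
    ultimately show ?thesis using assms(2) by fastforce
  qed
  show ?thesis
    using assms(1) no_child by (cases h) (auto simp: new_vertex_def)
qed

lemma max_label_removable:
  "hwf m d h \<Longrightarrow> lab \<in> set (labels_h h) \<Longrightarrow> lab \<noteq> label h \<Longrightarrow> \<forall>x\<in>set (labels_h h). x \<le> lab \<Longrightarrow>
     \<exists>h' i. h = add_h m d lab h' i \<and> i < ext_h h' \<and> hwf m d h'"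
  "swf m d p s \<Longrightarrow> lab \<in> set (labels_s s) \<Longrightarrow> \<forall>x\<in>set (labels_s s). x \<le> lab \<Longrightarrow>
     \<exists>s' i. s = add_s m d lab s' i \<and> i < ext_s s' \<and> swf m d p s'"
proof (induction h and s arbitrary: d and d p)
  case (V1 l s)
  then have "\<exists>s' i. s = add_s m (Suc d) lab s' i \<and> i < ext_s s' \<and> swf m (Suc d) l s'"
    using V1.IH[of "Suc d" l] by simp
  then obtain s' i where "s = add_s m (Suc d) lab s' i" "i < ext_s s'" "swf m (Suc d) l s'"
    by blast
  then show ?case using V1.prems by (intro exI[of _ "V1 l s'"] exI[of _ i]) auto
next
  case (V2 l s1 s2)
  show ?case
  proof (cases "lab \<in> set (labels_s s1)")
    case True
    then have "\<exists>s' i. s1 = add_s m (Suc d) lab s' i \<and> i < ext_s s' \<and> swf m (Suc d) l s'"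
      using V2.prems V2.IH(1)[of "Suc d" l] by simp
    then obtain s' i where "s1 = add_s m (Suc d) lab s' i" "i < ext_s s'" "swf m (Suc d) l s'"
      by blast
    then show ?thesis using V2.prems by (intro exI[of _ "V2 l s' s2"] exI[of _ i]) auto
  next
    case False
    then have "\<exists>s' i. s2 = add_s m (Suc d) lab s' i \<and> i < ext_s s' \<and> swf m (Suc d) l s'"
      using V2.prems V2.IH(2)[of "Suc d" l] by simp
    then obtain s' i where "s2 = add_s m (Suc d) lab s' i" "i < ext_s s'" "swf m (Suc d) l s'"
      by blast
    then show ?thesis using V2.prems by (intro exI[of _ "V2 l s1 s'"] exI[of _ "ext_s s1 + i"]) auto
  qed
next
  case Ext
  then show ?case by simp
next
  case (Sub h)
  show ?case
  proof (cases "lab = label h")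
    case True
    then have "h = new_vertex m d lab" using Sub.prems hwf_root_max_label by auto
    then show ?thesis using Sub.prems by (intro exI[of _ Ext] exI[of _ 0]) auto
  next
    case False
    then have "\<exists>h' i. h = add_h m d lab h' i \<and> i < ext_h h' \<and> hwf m d h'"
      using Sub.prems Sub.IH[of d] by simp
    then obtain h' i where "h = add_h m d lab h' i" "i < ext_h h'" "hwf m d h'"
      by blast
    then show ?thesis using Sub.prems by (intro exI[of _ "Sub h'"] exI[of _ i]) auto
  qed
qed

lemma historic_remove_max:
  assumes "historic m (Suc n) h" "1 \<le> n"
  obtains h' i where "historic m n h'" "i < ext_h h'" "h = add_h m 0 (Suc n) h' i"
proof -
  have hw: "hwf m 0 h" and di: "distinct (labels_h h)" and st: "set (labels_h h) = {1..Suc n}"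
    using assms(1) by (auto simp: historic_def)
  have "label h \<le> 1" using labels_above_root(1)[OF hw, of 1] st by simp
  then have "Suc n \<noteq> label h" using assms(2) by simp
  moreover have "Suc n \<in> set (labels_h h)" "\<forall>x\<in>set (labels_h h). x \<le> Suc n"
    using st by auto
  ultimately obtain h' i where h': "h = add_h m 0 (Suc n) h' i" "i < ext_h h'" "hwf m 0 h'"
    using max_label_removable(1)[OF hw] by blast
  have fresh: "Suc n \<notin> set (labels_h h')" and dist: "distinct (labels_h h')"
    using di unfolding h'(1) distinct_labels_add(1) by simp_all
  have "set (labels_h h') = insert (Suc n) (set (labels_h h')) - {Suc n}"
    using fresh by simp
  also have "\<dots> = {1..Suc n} - {Suc n}"
    using st by (simp add: h'(1) set_labels_add(1))
  also have "\<dots> = {1..n}"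
    by auto
  finally have "historic m n h'" using h'(3) dist by (simp add: historic_def)
  then show thesis using that h'(1,2) by blast
qed

lemma historic_add:
  assumes "historic m n h"
  shows "historic m (Suc n) (add_h m 0 (Suc n) h i)"
proof -
  have "hwf m 0 h" "distinct (labels_h h)" "set (labels_h h) = {1..n}"
    using assms by (simp_all add: historic_def)
  then show ?thesis
    by (auto simp: historic_def hwf_add(1) distinct_labels_add(1) set_labels_add(1))
qed

definition keys_at_height :: "nat \<Rightarrow> nat \<Rightarrow> nat" where
  "keys_at_height m x = (if x \<le> 2*m then x else m + (x - 2*m - 1) mod (m+1))"

lemma keys_at_height_grow_ext:
  assumes "1 \<le> m"
  shows "map (keys_at_height m) (grow_ext m x) = grow_leaf m (keys_at_height m x)"
proof -
  consider "x < 2*m" | "x = 2*m" | "2*m < x" by linarith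
  then show ?thesis
  proof cases
    case 1
    then show ?thesis by (auto simp: keys_at_height_def grow_ext_def grow_leaf_def branching_def)
  next
    case 2
    then show ?thesis using assms
      by (auto simp: keys_at_height_def grow_ext_def grow_leaf_def branching_def)
  next
    case 3
    define y where "y = x - (2*m + 1)"
    have x: "x = 2*m + 1 + y" using 3 by (simp add: y_def)
    define r where "r = y mod (m+1)"
    have r: "r < m + 1" "Suc y mod (m+1) = (if r = m then 0 else Suc r)"
      by (auto simp: r_def mod_Suc)
    have "branching m x \<longleftrightarrow> Suc y mod (m+1) = 0"
      by (simp add: branching_def x)
    then have br: "branching m x \<longleftrightarrow> r = m"
      using r(2) by simp
    have keys: "keys_at_height m x = m + r" "keys_at_height m (Suc x) = m + Suc y mod (m+1)"
      by (simp_all add: keys_at_height_def x r_def)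
    show ?thesis using br keys r by (auto simp: grow_ext_def grow_leaf_def)
  qed
qed

lemma btree_insert_correct:
  assumes "is_btree m T" "l < nleaves T" "1 \<le> m"
  shows "is_btree m (btree_insert m T l)"
    and "leaf_keys (btree_insert m T l) = expand_at (grow_leaf m) l (leaf_keys T)"
proof -
  obtain d where T: "wf_btree m 1 T" "leaf_depths T = {d}" using assms(1) by (auto simp: is_btree_def)
  have correct: "ins_correct m 1 d T l" using ins_ins_f_correct(1)[OF T assms(2)] .
  have "is_btree m (btree_insert m T l)
    \<and> leaf_keys (btree_insert m T l) = expand_at (grow_leaf m) l (leaf_keys T)"
  proof (cases "ins m T l")
    case (Ok t)
    then show ?thesis using correct by (auto simp: ins_correct_def btree_insert_def is_btree_def)
  next
    case (Spl a b)
    then have "balanced_forest m d [a, b]"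
      and keys: "leaf_keys a @ leaf_keys b = expand_at (grow_leaf m) l (leaf_keys T)"
      using correct by (simp_all add: ins_correct_def)
    then have "wf_btree m 1 (BNode 1 [a, b]) \<and> leaf_depths (BNode 1 [a, b]) = {Suc d}
      \<and> leaf_keys (BNode 1 [a, b]) = leaf_keys a @ leaf_keys b"
      using balanced_forest_node[of m d "[a, b]" 1 1] assms(3) by simp
    then show ?thesis using Spl keys by (simp add: btree_insert_def is_btree_def)
  qed
  then show "is_btree m (btree_insert m T l)"
    and "leaf_keys (btree_insert m T l) = expand_at (grow_leaf m) l (leaf_keys T)" by simp_all
qed

lemma btree_insert_leaf_inj:
  assumes "is_btree m T" "1 \<le> m" "l < nleaves T" "l' < nleaves T"
    and "btree_insert m T l = btree_insert m T l'"
  shows "l = l'"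
proof (rule expand_at_index_inj)
  show "grow_leaf m c \<noteq> [] \<and> hd (grow_leaf m c) \<noteq> c" for c
    using assms(2) by (auto simp: grow_leaf_def)
  show "expand_at (grow_leaf m) l (leaf_keys T) = expand_at (grow_leaf m) l' (leaf_keys T)"
    using btree_insert_correct(2)[OF assms(1,3,2)] btree_insert_correct(2)[OF assms(1,4,2)]
    using assms(5) by simp
qed (use assms(3,4) in \<open>simp_all add: nleaves_eq_length_leaf_keys\<close>)

lemma leaf_of_btree_insert:
  assumes "is_btree m T" "1 \<le> m" "l < nleaves T"
  shows "leaf_of m T (btree_insert m T l) = l"
  unfolding leaf_of_def
proof (rule the_equality)
  show "l < nleaves T \<and> btree_insert m T l = btree_insert m T l" using assms(3) by simp
  show "j = l" if "j < nleaves T \<and> btree_insert m T l = btree_insert m T j" for j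
    using btree_insert_leaf_inj[OF assms(1,2)] assms(3) that by metis
qed

lemma history_step:
  assumes "Ts \<in> histories m n" "1 \<le> m" "Suc k < n"
  shows "\<exists>!l. l < nleaves (Ts ! k) \<and> Ts ! Suc k = btree_insert m (Ts ! k) l"
    and "leaf_of m (Ts ! k) (Ts ! Suc k) < nleaves (Ts ! k)"
    and "Ts ! Suc k = btree_insert m (Ts ! k) (leaf_of m (Ts ! k) (Ts ! Suc k))"
proof -
  have T: "is_btree m (Ts ! k)" using assms(1,3) by (simp add: histories_def)
  have "\<exists>l < nleaves (Ts ! (Suc k - 1)). Ts ! Suc k = btree_insert m (Ts ! (Suc k - 1)) l"
    using assms(1,3) unfolding histories_def by blast
  then obtain l where "l < nleaves (Ts ! k)" "Ts ! Suc k = btree_insert m (Ts ! k) l"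
    by auto
  then show uniq: "\<exists>!l. l < nleaves (Ts ! k) \<and> Ts ! Suc k = btree_insert m (Ts ! k) l"
    using btree_insert_leaf_inj[OF T assms(2)] by metis
  show "leaf_of m (Ts ! k) (Ts ! Suc k) < nleaves (Ts ! k)"
    and "Ts ! Suc k = btree_insert m (Ts ! k) (leaf_of m (Ts ! k) (Ts ! Suc k))"
    using theI'[OF uniq] by (simp_all add: leaf_of_def)
qed

lemma new_vertex_root: "1 \<le> m \<Longrightarrow> new_vertex m 0 l = V1 l Ext"
  by (simp add: new_vertex_def branching_def)

lemma history_invariant:
  assumes "Ts \<in> histories m n" "1 \<le> m" "k < n"
  shows "leaf_keys (Ts ! k) = map (keys_at_height m) (ext_heights_h 0 (phi_pref m Ts k))
    \<and> historic m (Suc k) (phi_pref m Ts k)"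
  using assms(3)
proof (induction k)
  case 0
  then show ?case using assms(1,2)
    by (simp add: histories_def historic_def new_vertex_root keys_at_height_def branching_def)
next
  case (Suc k)
  let ?H = "phi_pref m Ts k" and ?l = "leaf_of m (Ts ! k) (Ts ! Suc k)"
  have IH: "leaf_keys (Ts ! k) = map (keys_at_height m) (ext_heights_h 0 ?H)" "historic m (Suc k) ?H"
    using Suc by auto
  have step: "?l < nleaves (Ts ! k)" "Ts ! Suc k = btree_insert m (Ts ! k) ?l"
    using history_step(2,3)[OF assms(1,2) Suc.prems] by simp_all
  have l: "?l < length (ext_heights_h 0 ?H)" "?l < ext_h ?H"
    using step(1) IH(1) by (simp_all add: nleaves_eq_length_leaf_keys length_ext_heights)
  have "is_btree m (Ts ! k)" using assms(1) Suc.prems by (simp add: histories_def)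
  then have "leaf_keys (Ts ! Suc k) = expand_at (grow_leaf m) ?l (leaf_keys (Ts ! k))"
    using btree_insert_correct(2)[OF _ step(1) assms(2)] step(2) by simp
  also have "\<dots> = map (keys_at_height m) (expand_at (grow_ext m) ?l (ext_heights_h 0 ?H))"
    using IH(1) map_expand_at[where f="keys_at_height m" and g="grow_ext m",
        OF keys_at_height_grow_ext[OF assms(2)] l(1)] by simp
  also have "\<dots> = map (keys_at_height m) (ext_heights_h 0 (phi_pref m Ts (Suc k)))"
    using ext_heights_add(1)[OF l(2)] by simp
  finally show ?case
    using historic_add[OF IH(2)] by simp
qed

lemma ext_phi_pref:
  assumes "Ts \<in> histories m n" "1 \<le> m" "k < n"
  shows "ext_h (phi_pref m Ts k) = nleaves (Ts ! k)"
  using history_invariant[OF assms]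
  by (simp add: nleaves_eq_length_leaf_keys length_ext_heights[symmetric])

lemma phi_pref_cong: "\<forall>j\<le>k. Ts ! j = Ts' ! j \<Longrightarrow> phi_pref m Ts k = phi_pref m Ts' k"
  by (induction k) auto

lemma Phi_historic:
  assumes "Ts \<in> histories m n" "1 \<le> m" "1 \<le> n"
  shows "historic m n (Phi m Ts)"
  using history_invariant[OF assms(1,2), of "n - 1"] assms by (simp add: Phi_def histories_def)

lemma Phi_inj_on:
  assumes "1 \<le> m" "1 \<le> n"
  shows "inj_on (Phi m) (histories m n)"
proof
  fix Ts Ts' assume Ts: "Ts \<in> histories m n" and Ts': "Ts' \<in> histories m n"
    and eq: "Phi m Ts = Phi m Ts'"
  have prefix_eq: "\<forall>j\<le>k. Ts ! j = Ts' ! j"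
    if "k < n" "phi_pref m Ts k = phi_pref m Ts' k" for k
    using that
  proof (induction k)
    case 0
    then show ?case using Ts Ts' by (simp add: histories_def)
  next
    case (Suc k)
    let ?H = "phi_pref m Ts k" and ?l = "leaf_of m (Ts ! k) (Ts ! Suc k)"
    let ?H' = "phi_pref m Ts' k" and ?l' = "leaf_of m (Ts' ! k) (Ts' ! Suc k)"
    have fresh: "Suc (Suc k) \<notin> set (labels_h ?H)" "Suc (Suc k) \<notin> set (labels_h ?H')"
      using history_invariant[OF Ts assms(1), of k] history_invariant[OF Ts' assms(1), of k] Suc.prems
      by (simp_all add: historic_def)
    have "?l < ext_h ?H" "?l' < ext_h ?H'"
      using history_step(2)[OF Ts assms(1) Suc.prems(1)] history_step(2)[OF Ts' assms(1) Suc.prems(1)]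
        ext_phi_pref[OF Ts assms(1)] ext_phi_pref[OF Ts' assms(1)] Suc.prems(1) by simp_all
    moreover have "add_h m 0 (Suc (Suc k)) ?H ?l = add_h m 0 (Suc (Suc k)) ?H' ?l'"
      using Suc.prems(2) by simp
    ultimately have "?H = ?H'" "?l = ?l'" using add_inj(1)[OF fresh] by blast+
    then have "\<forall>j\<le>k. Ts ! j = Ts' ! j" using Suc by simp
    moreover have "Ts ! Suc k = Ts' ! Suc k"
      using history_step(3)[OF Ts assms(1) Suc.prems(1)] history_step(3)[OF Ts' assms(1) Suc.prems(1)]
        \<open>?l = ?l'\<close> calculation by simp
    ultimately show ?case using le_Suc_eq by auto
  qed
  have "length Ts = n" "length Ts' = n" using Ts Ts' by (simp_all add: histories_def)
  moreover have "\<forall>j\<le>n-1. Ts ! j = Ts' ! j"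
    using prefix_eq[of "n-1"] eq assms(2) calculation by (simp add: Phi_def)
  ultimately show "Ts = Ts'" by (intro nth_equalityI) auto
qed

lemma histories_snoc:
  assumes "Ts \<in> histories m n" "1 \<le> m" "1 \<le> n" "i < nleaves (Ts ! (n-1))"
  shows "Ts @ [btree_insert m (Ts ! (n-1)) i] \<in> histories m (Suc n)"
proof -
  have len: "length Ts = n" using assms(1) by (simp add: histories_def)
  have "is_btree m (Ts ! (n-1))" using assms(1,3) by (simp add: histories_def)
  then have "is_btree m (btree_insert m (Ts ! (n-1)) i)"
    using btree_insert_correct(1) assms(2,4) by blast
  then show ?thesis
    using assms(1,3,4) len
    by (auto simp: histories_def nth_append less_Suc_eq)
qed

lemma Phi_snoc:
  assumes "Ts \<in> histories m n" "1 \<le> m" "1 \<le> n" "i < nleaves (Ts ! (n-1))"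
  shows "Phi m (Ts @ [btree_insert m (Ts ! (n-1)) i]) = add_h m 0 (Suc n) (Phi m Ts) i"
proof -
  obtain k where n: "n = Suc k" using assms(3) by (cases n) auto
  let ?T = "Ts ! k" and ?Ts' = "Ts @ [btree_insert m (Ts ! k) i]"
  have len: "length Ts = Suc k" using assms(1) n by (simp add: histories_def)
  then have nth: "?Ts' ! k = ?T" "?Ts' ! Suc k = btree_insert m ?T i" "\<forall>j\<le>k. ?Ts' ! j = Ts ! j"
    by (auto simp: nth_append)
  have "leaf_of m ?T (btree_insert m ?T i) = i"
    using leaf_of_btree_insert assms n by (simp add: histories_def)
  then have "phi_pref m ?Ts' (Suc k) = add_h m 0 (Suc n) (phi_pref m Ts k) i"
    using nth phi_pref_cong[OF nth(3)] n by simp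
  then show ?thesis using len n by (simp add: Phi_def)
qed

lemma historic_one: "1 \<le> m \<Longrightarrow> historic m 1 h \<Longrightarrow> h = V1 1 Ext"
  using hwf_root_max_label[of m 0 h] label_in_labels[of h] new_vertex_root
  by (fastforce simp: historic_def)

lemma Phi_surj_on:
  assumes "1 \<le> m" "1 \<le> n" "historic m n h"
  shows "h \<in> Phi m ` histories m n"
  using assms(2,3)
proof (induction n arbitrary: h rule: nat_induct_at_least)
  case base
  then have "h = Phi m [BNode 1 []]"
    using historic_one assms(1) new_vertex_root by (simp add: Phi_def)
  moreover have "[BNode 1 []] \<in> histories m 1"
    using assms(1) by (auto simp: histories_def is_btree_def)
  ultimately show ?case by blast
next
  case (Suc n)
  obtain h' i where h': "historic m n h'" "i < ext_h h'" "h = add_h m 0 (Suc n) h' i"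
    using historic_remove_max[OF Suc.prems Suc.hyps] by blast
  obtain Ts where Ts: "Ts \<in> histories m n" "Phi m Ts = h'" using Suc.IH h'(1) by blast
  have "i < nleaves (Ts ! (n-1))"
    using ext_phi_pref[OF Ts(1) assms(1), of "n-1"] Ts h'(2) Suc.hyps
    by (simp add: Phi_def histories_def)
  then show ?case
    using histories_snoc[OF Ts(1) assms(1) Suc.hyps] Phi_snoc[OF Ts(1) assms(1) Suc.hyps] Ts(2) h'(3)
    by (metis image_eqI)
qed

theorem theorem1:
  fixes m n :: nat
  assumes "m \<ge> 1" and "n \<ge> 1"
  shows "(\<forall>Ts \<in> histories m n.
            (\<forall>k. 0 < k \<and> k < n \<longrightarrow>
               (\<exists>!l. l < nleaves (Ts ! (k-1)) \<and> Ts ! k = btree_insert m (Ts ! (k-1)) l)) \<and>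
            (\<forall>k < n. ext_h (phi_pref m Ts k) = nleaves (Ts ! k)))
       \<and> bij_betw (Phi m) (histories m n) {h. historic m n h}"
proof (intro conjI ballI allI impI)
  fix Ts k assume "Ts \<in> histories m n"
  show "\<exists>!l. l < nleaves (Ts ! (k-1)) \<and> Ts ! k = btree_insert m (Ts ! (k-1)) l"
    if "0 < k \<and> k < n"
    using history_step(1)[OF \<open>Ts \<in> histories m n\<close> assms(1), of "k-1"] that by simp
  show "ext_h (phi_pref m Ts k) = nleaves (Ts ! k)" if "k < n"
    using ext_phi_pref[OF \<open>Ts \<in> histories m n\<close> assms(1) that] .
next
  show "bij_betw (Phi m) (histories m n) {h. historic m n h}"
    unfolding bij_betw_def
    using Phi_inj_on[OF assms] Phi_historic[OF _ assms] Phi_surj_on[OF assms] by blast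
qed

end
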